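(* Let $R$ be a ring and $a\in R$. Then $a$ is feckly clean if and only if there exists an element $e\in R$ such that $$V(a-1)\subseteq V(e)\subseteq \operatorname{Max}(R)\setminus V(a)\quad\text{and}\quad eR(1-e)\subseteq J(R).$$
   Context: Rings are associative with identity, not necessarily commutative; $J(R)$ is the Jacobson radical. An element $u\in R$ is full if $RuR=R$. An element $a\in R$ is feckly clean if there exist $e\in R$ and a full element $u\in R$ with $a=e+u$ and $eR(1-e)\subseteq J(R)$. $\operatorname{Max}(R)$ is the set of all maximal (two-sided) ideals of $R$. For an ideal $I$, $V(I)=\{P\in\operatorname{Max}(R): I\subseteq P\}$, and for $a\in R$, $V(a)=V(RaR)$. *)

theory Defs
  imports Main
begin

definition left_ideal :: "'a::ring_1 set \<Rightarrow> bool" where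
  "left_ideal I \<longleftrightarrow> 0 \<in> I \<and> (\<forall>x\<in>I. \<forall>y\<in>I. x + y \<in> I) \<and> (\<forall>r x. x \<in> I \<longrightarrow> r * x \<in> I)"

definition two_sided_ideal :: "'a::ring_1 set \<Rightarrow> bool" where
  "two_sided_ideal I \<longleftrightarrow> 0 \<in> I \<and> (\<forall>x\<in>I. \<forall>y\<in>I. x + y \<in> I)
     \<and> (\<forall>r x. x \<in> I \<longrightarrow> r * x \<in> I) \<and> (\<forall>r x. x \<in> I \<longrightarrow> x * r \<in> I)"

definition maximal_left_ideal :: "'a::ring_1 set \<Rightarrow> bool" where
  "maximal_left_ideal M \<longleftrightarrow> left_ideal M \<and> M \<noteq> UNIV \<and>
     (\<forall>I. left_ideal I \<and> M \<subseteq> I \<and> I \<noteq> UNIV \<longrightarrow> I = M)"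

definition maximal_ideal :: "'a::ring_1 set \<Rightarrow> bool" where
  "maximal_ideal M \<longleftrightarrow> two_sided_ideal M \<and> M \<noteq> UNIV \<and>
     (\<forall>I. two_sided_ideal I \<and> M \<subseteq> I \<and> I \<noteq> UNIV \<longrightarrow> I = M)"

definition jacobson :: "'a::ring_1 set" where
  "jacobson = \<Inter>{M. maximal_left_ideal M}"

definition ideal_gen :: "'a::ring_1 set \<Rightarrow> 'a set" where
  "ideal_gen S = \<Inter>{I. two_sided_ideal I \<and> S \<subseteq> I}"

definition full :: "'a::ring_1 \<Rightarrow> bool" where
  "full u \<longleftrightarrow> ideal_gen {u} = UNIV"

definition MaxSpec :: "'a::ring_1 set set" where
  "MaxSpec = {P. maximal_ideal P}"

definition VI :: "'a::ring_1 set \<Rightarrow> 'a set set" where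
  "VI I = {P \<in> MaxSpec. I \<subseteq> P}"

definition Vel :: "'a::ring_1 \<Rightarrow> 'a set set" where
  "Vel a = VI (ideal_gen {a})"

definition feckly_clean :: "'a::ring_1 \<Rightarrow> bool" where
  "feckly_clean a \<longleftrightarrow> (\<exists>e u. full u \<and> a = e + u \<and> (\<forall>r. e * r * (1 - e) \<in> jacobson))"

end

theory Submission
  imports Defs
begin

text \<open>
  Modulo a maximal ideal \<open>P\<close> an element \<open>e\<close> with \<open>eR(1 - e) \<subseteq> J(R)\<close> behaves like an
  idempotent: since \<open>J(R) \<subseteq> P\<close> and \<open>P\<close> is prime, exactly one of \<open>e\<close>, \<open>1 - e\<close> lies in \<open>P\<close>.
  An element is full iff it avoids every maximal ideal, so \<open>a = e + u\<close> with \<open>u = a - e\<close>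
  full says that no \<open>P\<close> contains \<open>a - e\<close>. For \<open>e \<in> P\<close> this means \<open>a \<notin> P\<close>, and for
  \<open>1 - e \<in> P\<close> it means \<open>a - 1 \<notin> P\<close>, because \<open>a - e = (a - 1) + (1 - e)\<close>; these two
  conditions are exactly the two inclusions between the sets \<open>V(\<cdot>)\<close>.
\<close>

lemma left_ideal_zero: "left_ideal I \<Longrightarrow> 0 \<in> I"
  by (simp add: left_ideal_def)

lemma left_ideal_add: "left_ideal I \<Longrightarrow> x \<in> I \<Longrightarrow> y \<in> I \<Longrightarrow> x + y \<in> I"
  by (simp add: left_ideal_def)

lemma left_ideal_mult: "left_ideal I \<Longrightarrow> x \<in> I \<Longrightarrow> r * x \<in> I"
  by (simp add: left_ideal_def)

lemma left_ideal_uminus: "left_ideal I \<Longrightarrow> x \<in> I \<Longrightarrow> - x \<in> I"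
  by (metis left_ideal_mult mult_minus1)

lemma left_ideal_diff: "left_ideal I \<Longrightarrow> x \<in> I \<Longrightarrow> y \<in> I \<Longrightarrow> x - y \<in> I"
  by (metis left_ideal_add left_ideal_uminus diff_conv_add_uminus)

lemma left_ideal_add_mem_iff: "left_ideal I \<Longrightarrow> y \<in> I \<Longrightarrow> x + y \<in> I \<longleftrightarrow> x \<in> I"
  by (metis left_ideal_add left_ideal_diff add_diff_cancel)

lemma left_ideal_eq_UNIV_iff: "left_ideal I \<Longrightarrow> I = UNIV \<longleftrightarrow> 1 \<in> I"
  by (metis UNIV_I UNIV_eq_I left_ideal_mult mult.right_neutral)

lemma two_sided_ideal_iff: "two_sided_ideal I \<longleftrightarrow> left_ideal I \<and> (\<forall>r x. x \<in> I \<longrightarrow> x * r \<in> I)"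
  by (auto simp: two_sided_ideal_def left_ideal_def)

lemma two_sided_ideal_imp_left_ideal: "two_sided_ideal I \<Longrightarrow> left_ideal I"
  by (simp add: two_sided_ideal_iff)

lemma two_sided_ideal_mult_right: "two_sided_ideal I \<Longrightarrow> x \<in> I \<Longrightarrow> x * r \<in> I"
  by (simp add: two_sided_ideal_iff)

lemma maximal_ideal_imp_left_ideal: "maximal_ideal P \<Longrightarrow> left_ideal P"
  by (simp add: maximal_ideal_def two_sided_ideal_imp_left_ideal)

lemma maximal_ideal_one_not_mem: "maximal_ideal P \<Longrightarrow> (1::'a::ring_1) \<notin> P"
  using left_ideal_eq_UNIV_iff maximal_ideal_def maximal_ideal_imp_left_ideal by blast

lemma maximal_left_ideal_one_not_mem: "maximal_left_ideal M \<Longrightarrow> (1::'a::ring_1) \<notin> M"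
  using left_ideal_eq_UNIV_iff maximal_left_ideal_def by blast

lemma two_sided_ideal_Inter:
  "(\<And>I. I \<in> \<I> \<Longrightarrow> two_sided_ideal I) \<Longrightarrow> two_sided_ideal (\<Inter>\<I>)"
  by (simp add: two_sided_ideal_def)

lemma two_sided_ideal_ideal_gen: "two_sided_ideal (ideal_gen S)"
  unfolding ideal_gen_def by (rule two_sided_ideal_Inter) blast

lemma ideal_gen_subset_iff: "two_sided_ideal I \<Longrightarrow> ideal_gen S \<subseteq> I \<longleftrightarrow> S \<subseteq> I"
  unfolding ideal_gen_def by blast

lemma Vel_eq: "Vel a = {P. maximal_ideal P \<and> a \<in> P}"
proof -
  have "ideal_gen {a} \<subseteq> P \<longleftrightarrow> a \<in> P" if "maximal_ideal P" for P
    using that by (simp add: maximal_ideal_def ideal_gen_subset_iff)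
  then show ?thesis
    by (auto simp: Vel_def VI_def MaxSpec_def)
qed

lemma left_ideal_Union_chain:
  assumes "C \<noteq> {}" and "\<And>A. A \<in> C \<Longrightarrow> left_ideal A"
    and chain: "\<forall>A\<in>C. \<forall>B\<in>C. A \<subseteq> B \<or> B \<subseteq> A"
  shows "left_ideal (\<Union>C)"
  unfolding left_ideal_def
proof (intro conjI ballI allI impI)
  show "0 \<in> \<Union>C"
    using assms(1,2) left_ideal_zero by blast
  fix x y assume "x \<in> \<Union>C" "y \<in> \<Union>C"
  then obtain A B where "A \<in> C" "B \<in> C" "x \<in> A" "y \<in> B"
    by blast
  with chain obtain D where "D \<in> C" "x \<in> D" "y \<in> D"
    by blast
  then show "x + y \<in> \<Union>C"
    using assms(2) left_ideal_add by blast
next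
  fix r x assume "x \<in> \<Union>C"
  then show "r * x \<in> \<Union>C"
    using assms(2) left_ideal_mult by blast
qed

lemma two_sided_ideal_Union_chain:
  assumes "C \<noteq> {}" and "\<And>A. A \<in> C \<Longrightarrow> two_sided_ideal A"
    and "\<forall>A\<in>C. \<forall>B\<in>C. A \<subseteq> B \<or> B \<subseteq> A"
  shows "two_sided_ideal (\<Union>C)"
  using left_ideal_Union_chain[OF assms(1) _ assms(3)] assms(2)
  by (auto simp: two_sided_ideal_iff)

lemma exists_maximal_extension:
  fixes Q :: "'a::ring_1 set \<Rightarrow> bool"
  assumes Q_left_ideal: "\<And>J. Q J \<Longrightarrow> left_ideal J"
    and Q_chain: "\<And>C. C \<noteq> {} \<Longrightarrow> (\<And>A. A \<in> C \<Longrightarrow> Q A) \<Longrightarrow>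
        \<forall>A\<in>C. \<forall>B\<in>C. A \<subseteq> B \<or> B \<subseteq> A \<Longrightarrow> Q (\<Union>C)"
    and "Q I" "1 \<notin> I"
  shows "\<exists>M. Q M \<and> M \<noteq> UNIV \<and> (\<forall>J. Q J \<and> M \<subseteq> J \<and> J \<noteq> UNIV \<longrightarrow> J = M) \<and> I \<subseteq> M"
proof -
  let ?S = "{J. Q J \<and> I \<subseteq> J \<and> 1 \<notin> J}"
  have "\<exists>M\<in>?S. \<forall>J\<in>?S. M \<subseteq> J \<longrightarrow> J = M"
  proof (rule subset_Zorn_nonempty)
    show "?S \<noteq> {}"
      using assms(3,4) by blast
    fix C assume "C \<noteq> {}" "subset.chain ?S C"
    then show "\<Union>C \<in> ?S"
      using Q_chain[of C] by (auto simp: subset_chain_def)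
  qed
  then obtain M where "M \<in> ?S" and "\<forall>J\<in>?S. M \<subseteq> J \<longrightarrow> J = M"
    by blast
  then show ?thesis
    using Q_left_ideal left_ideal_eq_UNIV_iff by (metis (mono_tags, lifting) mem_Collect_eq order_trans)
qed

lemma exists_maximal_left_ideal:
  "left_ideal I \<Longrightarrow> (1::'a::ring_1) \<notin> I \<Longrightarrow> \<exists>M. maximal_left_ideal M \<and> I \<subseteq> M"
  using exists_maximal_extension[of left_ideal I] left_ideal_Union_chain
  unfolding maximal_left_ideal_def by blast

lemma exists_maximal_ideal:
  "two_sided_ideal I \<Longrightarrow> (1::'a::ring_1) \<notin> I \<Longrightarrow> \<exists>P. maximal_ideal P \<and> I \<subseteq> P"
  using exists_maximal_extension[of two_sided_ideal I] two_sided_ideal_Union_chain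
    two_sided_ideal_imp_left_ideal
  unfolding maximal_ideal_def by blast

lemma full_iff_not_mem_maximal_ideal: "full u \<longleftrightarrow> (\<forall>P. maximal_ideal P \<longrightarrow> (u::'a::ring_1) \<notin> P)"
proof
  assume "full u"
  then show "\<forall>P. maximal_ideal P \<longrightarrow> u \<notin> P"
    using ideal_gen_subset_iff[of _ "{u}"] unfolding full_def maximal_ideal_def by blast
next
  assume no_max: "\<forall>P. maximal_ideal P \<longrightarrow> u \<notin> P"
  have "u \<in> ideal_gen {u}"
    using ideal_gen_subset_iff[OF two_sided_ideal_ideal_gen] by blast
  then have "1 \<in> ideal_gen {u}"
    using exists_maximal_ideal[OF two_sided_ideal_ideal_gen] no_max by blast
  then show "full u"
    unfolding full_def
    using left_ideal_eq_UNIV_iff two_sided_ideal_ideal_gen two_sided_ideal_imp_left_ideal by blast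
qed

lemma maximal_left_ideal_decompose:
  fixes M :: "'a::ring_1 set"
  assumes M: "maximal_left_ideal M" and "x \<notin> M"
  shows "\<exists>m\<in>M. \<exists>s. z = m + s * x"
proof -
  define K where "K = {m + s * x | m s. m \<in> M}"
  have LM: "left_ideal M"
    using M by (simp add: maximal_left_ideal_def)
  have K_mem: "m + s * x \<in> K" if "m \<in> M" for m s
    unfolding K_def using that by blast
  have "left_ideal K"
    unfolding left_ideal_def K_def
  proof (intro conjI ballI allI impI)
    have "(0::'a) = 0 + 0 * x"
      by simp
    then show "0 \<in> {m + s * x | m s. m \<in> M}"
      using left_ideal_zero[OF LM] by blast
  next
    fix a b assume "a \<in> {m + s * x | m s. m \<in> M}" "b \<in> {m + s * x | m s. m \<in> M}"
    then obtain m s m' s' where "a = m + s * x" "b = m' + s' * x" "m \<in> M" "m' \<in> M"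
      by blast
    then have "a + b = (m + m') + (s + s') * x \<and> m + m' \<in> M"
      using left_ideal_add[OF LM] by (simp add: algebra_simps)
    then show "a + b \<in> {m + s * x | m s. m \<in> M}"
      by blast
  next
    fix r a assume "a \<in> {m + s * x | m s. m \<in> M}"
    then obtain m s where "a = m + s * x" "m \<in> M"
      by blast
    then have "r * a = r * m + (r * s) * x \<and> r * m \<in> M"
      using left_ideal_mult[OF LM] by (simp add: algebra_simps)
    then show "r * a \<in> {m + s * x | m s. m \<in> M}"
      by blast
  qed
  moreover have "M \<subseteq> K"
    using K_mem[where s = 0] by auto
  moreover have "x \<in> K"
    using K_mem[OF left_ideal_zero[OF LM], where s = 1] by simp
  ultimately have "K = UNIV"
    using M \<open>x \<notin> M\<close> unfolding maximal_left_ideal_def by blast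
  then show ?thesis
    unfolding K_def by blast
qed

lemma maximal_left_ideal_preimage_mult_right:
  fixes M :: "'a::ring_1 set"
  assumes M: "maximal_left_ideal M" and "r \<notin> M"
  shows "maximal_left_ideal {y. y * r \<in> M}"
  unfolding maximal_left_ideal_def
proof (intro conjI allI impI)
  have LM: "left_ideal M"
    using M by (simp add: maximal_left_ideal_def)
  then show "left_ideal {y. y * r \<in> M}"
    by (auto simp: left_ideal_def distrib_right mult.assoc)
  show "{y. y * r \<in> M} \<noteq> UNIV"
    using \<open>r \<notin> M\<close> by (metis UNIV_I mem_Collect_eq mult_1)
  fix I assume I: "left_ideal I \<and> {y. y * r \<in> M} \<subseteq> I \<and> I \<noteq> UNIV"
  have "I \<subseteq> {y. y * r \<in> M}"
  proof (rule ccontr)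
    assume "\<not> I \<subseteq> {y. y * r \<in> M}"
    then obtain y where "y \<in> I" "y * r \<notin> M"
      by blast
    have "z \<in> I" for z
    proof -
      obtain m s where "m \<in> M" "z * r = m + s * (y * r)"
        using maximal_left_ideal_decompose[OF M \<open>y * r \<notin> M\<close>] by blast
      then have "(z - s * y) * r \<in> M"
        by (simp add: algebra_simps)
      then have "(z - s * y) + s * y \<in> I"
        using I \<open>y \<in> I\<close> left_ideal_add left_ideal_mult by blast
      then show "z \<in> I"
        by simp
    qed
    then show False
      using I by blast
  qed
  then show "I = {y. y * r \<in> M}"
    using I by blast
qed

lemma jacobson_mult_right_mem: "x \<in> jacobson \<Longrightarrow> maximal_left_ideal M \<Longrightarrow> x * r \<in> M"
  using maximal_left_ideal_preimage_mult_right[of M r] left_ideal_mult[of M r x]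
  by (cases "r \<in> M") (auto simp: jacobson_def maximal_left_ideal_def)

lemma two_sided_ideal_colon:
  assumes "left_ideal I"
  shows "two_sided_ideal {x. \<forall>t. x * t * c \<in> I}"
  unfolding two_sided_ideal_iff
proof (intro conjI allI impI)
  show "left_ideal {x. \<forall>t. x * t * c \<in> I}"
    using assms by (auto simp: left_ideal_def distrib_right mult.assoc)
  fix r x assume "x \<in> {x. \<forall>t. x * t * c \<in> I}"
  then have "x * (r * t) * c \<in> I" for t
    by blast
  then show "x * r \<in> {x. \<forall>t. x * t * c \<in> I}"
    by (simp add: mult.assoc)
qed

lemma colon_eq_maximal_ideal:
  fixes P :: "'a::ring_1 set"
  assumes P: "maximal_ideal P" and I: "left_ideal I" "P \<subseteq> I" and "c \<notin> I"
  shows "{x. \<forall>t. x * t * c \<in> I} = P"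
proof -
  have "P \<subseteq> {x. \<forall>t. x * t * c \<in> I}"
    using P I(2) two_sided_ideal_mult_right unfolding maximal_ideal_def by blast
  moreover have "{x. \<forall>t. x * t * c \<in> I} \<noteq> UNIV"
    using \<open>c \<notin> I\<close> by (metis (mono_tags) UNIV_I mem_Collect_eq mult_1)
  ultimately show ?thesis
    using P two_sided_ideal_colon[OF I(1)] unfolding maximal_ideal_def by blast
qed

lemma jacobson_subset_maximal_ideal:
  assumes P: "maximal_ideal P"
  shows "jacobson \<subseteq> P"
proof -
  obtain M where M: "maximal_left_ideal M" "P \<subseteq> M"
    using exists_maximal_left_ideal P maximal_ideal_imp_left_ideal maximal_ideal_one_not_mem
    by blast
  have "{x. \<forall>t. x * t * 1 \<in> M} = P"
    using colon_eq_maximal_ideal[OF P _ M(2)] M(1) maximal_left_ideal_one_not_mem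
    unfolding maximal_left_ideal_def by blast
  moreover have "jacobson \<subseteq> {x. \<forall>t. x * t * 1 \<in> M}"
    using jacobson_mult_right_mem[OF _ M(1)] by (simp add: subset_iff)
  ultimately show ?thesis
    by blast
qed

lemma maximal_ideal_prime:
  "maximal_ideal P \<Longrightarrow> \<forall>t. x * t * y \<in> P \<Longrightarrow> x \<in> P \<or> y \<in> P"
  using colon_eq_maximal_ideal[of P P y] maximal_ideal_imp_left_ideal by blast

lemma maximal_ideal_not_mem_iff_complement_mem:
  assumes P: "maximal_ideal P" and e: "\<forall>r. e * r * (1 - e) \<in> jacobson"
  shows "e \<notin> P \<longleftrightarrow> 1 - e \<in> P"
proof -
  have "e \<in> P \<or> 1 - e \<in> P"
    using maximal_ideal_prime[OF P] e jacobson_subset_maximal_ideal[OF P] by blast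
  moreover have "\<not> (e \<in> P \<and> 1 - e \<in> P)"
    using left_ideal_add[OF maximal_ideal_imp_left_ideal[OF P], of e "1 - e"]
      maximal_ideal_one_not_mem[OF P] by auto
  ultimately show ?thesis
    by blast
qed

lemma diff_mem_maximal_ideal_iff:
  assumes P: "maximal_ideal P" and e: "\<forall>r. e * r * (1 - e) \<in> jacobson"
  shows "a - e \<in> P \<longleftrightarrow> (if e \<in> P then a \<in> P else a - 1 \<in> P)"
proof -
  have L: "left_ideal P"
    using P by (rule maximal_ideal_imp_left_ideal)
  show ?thesis
  proof (cases "e \<in> P")
    case True
    then show ?thesis
      using left_ideal_add_mem_iff[OF L left_ideal_uminus[OF L True], of a] by simp
  next
    case False
    then have "1 - e \<in> P"
      using maximal_ideal_not_mem_iff_complement_mem[OF P e] by blast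
    moreover have "a - e = (a - 1) + (1 - e)"
      by simp
    ultimately show ?thesis
      using False left_ideal_add_mem_iff[OF L] by presburger
  qed
qed

lemma full_diff_iff_Vel:
  assumes e: "\<forall>r. e * r * (1 - e) \<in> jacobson"
  shows "full (a - e) \<longleftrightarrow> Vel (a - 1) \<subseteq> Vel e \<and> Vel e \<subseteq> MaxSpec - Vel a"
proof -
  have "a - e \<notin> P \<longleftrightarrow> (e \<in> P \<longrightarrow> a \<notin> P) \<and> (a - 1 \<in> P \<longrightarrow> e \<in> P)" if "maximal_ideal P" for P
    using diff_mem_maximal_ideal_iff[OF that e, of a] by (cases "e \<in> P") simp_all
  then have "full (a - e) \<longleftrightarrow>
      (\<forall>P. maximal_ideal P \<longrightarrow> (e \<in> P \<longrightarrow> a \<notin> P) \<and> (a - 1 \<in> P \<longrightarrow> e \<in> P))"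
    unfolding full_iff_not_mem_maximal_ideal by blast
  also have "\<dots> \<longleftrightarrow> Vel (a - 1) \<subseteq> Vel e \<and> Vel e \<subseteq> MaxSpec - Vel a"
    by (auto simp: Vel_eq MaxSpec_def)
  finally show ?thesis .
qed

lemma feckly_clean_iff_full_diff:
  "feckly_clean a \<longleftrightarrow> (\<exists>e. full (a - e) \<and> (\<forall>r. e * r * (1 - e) \<in> jacobson))"
  unfolding feckly_clean_def by (metis add_diff_cancel_left' add.commute diff_add_cancel)

theorem lemma2p2:
  fixes a :: "'a::ring_1"
  shows "feckly_clean a \<longleftrightarrow>
    (\<exists>e. Vel (a - 1) \<subseteq> Vel e \<and> Vel e \<subseteq> MaxSpec - Vel a \<and>
         (\<forall>r. e * r * (1 - e) \<in> jacobson))"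
  unfolding feckly_clean_iff_full_diff
  by (rule ex_cong1) (use full_diff_iff_Vel in blast)

end
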